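(* Let $m$ be a positive integer and $F$ a distribution function with finite $m$-th absolute moment. Then $\mathsf L_{F,m}$ is invertible in $(\mathbb R_m[\mathrm D],\circ)$ and $$\mathsf L_{F,m}^{-1}=\sum_{n=0}^m\Bigl(\sum_{p\in\mathcal P(m,n)}(-1)^{n+p_1}\binom{p_1}{\Delta p}\prod_{k=1}^m\Bigl(\frac{\mu_{F,k}}{k!}\Bigr)^{(\Delta p)_k}\Bigr)\mathrm D^n.$$
   Context: $(\mathbb R_m[\mathrm D],\circ)$ is the ring of polynomials in $\mathrm D$ of degree at most $m$ with multiplication of polynomials modulo $\mathrm D^{m+1}$. $\mu_{F,k}=\int x^k\,dF(x)$ and $\mathsf L_{F,m}=\sum_{k=0}^m\frac{(-1)^k}{k!}\mu_{F,k}\mathrm D^k$. An ordered partition of length $k$ of an integer $n$ is a $k$-tuple of positive integers $p_1\ge\dots\ge p_k>0$ with sum $n$; one sets $p_i=0$ for $i>k$ (the empty partition, of length $0$, is the partition of $n=0$). $\mathcal P(m,n)$ is the set of ordered partitions of $n$ of length at most $m$. For such $p$, $\Delta p=(p_1-p_2,p_2-p_3,\dots,p_m-p_{m+1})$, and for a tuple $k=(k_1,\dots,k_m)$ of nonnegative integers with sum $q$, $\binom{q}{k}=q!/(k_1!\cdots k_m!)$. *)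

theory Defs
  imports "HOL-Probability.Probability" "HOL-Computational_Algebra.Polynomial"
begin

definition distribution_function :: "(real \<Rightarrow> real) \<Rightarrow> bool" where
  "distribution_function F \<longleftrightarrow> mono F \<and> (\<forall>a. continuous (at_right a) F)
     \<and> (F \<longlongrightarrow> 0) at_bot \<and> (F \<longlongrightarrow> 1) at_top"

definition moment :: "(real \<Rightarrow> real) \<Rightarrow> nat \<Rightarrow> real" where
  "moment F k = (\<integral>x. x ^ k \<partial>(interval_measure F))"

text \<open>Multiplication in R_m[D]: polynomial product modulo D^(m+1).\<close>
definition tmult :: "nat \<Rightarrow> real poly \<Rightarrow> real poly \<Rightarrow> real poly" where
  "tmult m p q = (\<Sum>i\<le>m. monom (coeff (p * q) i) i)"

definition trunc_invertible :: "nat \<Rightarrow> real poly \<Rightarrow> bool" where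
  "trunc_invertible m p \<longleftrightarrow> degree p \<le> m \<and>
     (\<exists>q. degree q \<le> m \<and> tmult m p q = 1 \<and> tmult m q p = 1)"

definition L_op :: "(real \<Rightarrow> real) \<Rightarrow> nat \<Rightarrow> real poly" where
  "L_op F m = (\<Sum>k\<le>m. monom ((-1) ^ k / fact k * moment F k) k)"

definition partitions :: "nat \<Rightarrow> nat \<Rightarrow> (nat \<Rightarrow> nat) set" where
  "partitions m n = {p. (\<forall>i. i \<notin> {1..m} \<longrightarrow> p i = 0) \<and>
      (\<forall>i\<in>{1..<m}. p (Suc i) \<le> p i) \<and> (\<Sum>i=1..m. p i) = n}"

definition Delta :: "(nat \<Rightarrow> nat) \<Rightarrow> nat \<Rightarrow> nat" where
  "Delta p k = p k - p (Suc k)"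

text \<open>Multinomial coefficient binom(q, k) with q = k_1+...+k_m.\<close>
definition multinom :: "nat \<Rightarrow> nat \<Rightarrow> (nat \<Rightarrow> nat) \<Rightarrow> real" where
  "multinom m q k = fact q / (\<Prod>i=1..m. fact (k i))"

definition L_inv_formula :: "(real \<Rightarrow> real) \<Rightarrow> nat \<Rightarrow> real poly" where
  "L_inv_formula F m = (\<Sum>n\<le>m. monom
     (\<Sum>p\<in>partitions m n. (-1) ^ (n + p 1) * multinom m (p 1) (Delta p) *
        (\<Prod>k=1..m. (moment F k / fact k) ^ (Delta p k))) n)"

end

theory Submission
  imports Defs
begin

text \<open>With \<open>a k = \<mu>\<^sub>k / k!\<close> we have \<open>L = \<Sum>k\<le>m. (-1)^k a k D^k\<close> and \<open>a 0 = \<mu>\<^sub>0 = 1\<close>, so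
  the coefficients of the truncated inverse of \<open>L\<close> are determined by \<open>c 0 = 1\<close> and
  \<open>c n = \<Sum>k = 1..min m n. (-1)^(k+1) a k c (n - k)\<close>; it suffices to show that the partition
  sums of the formula satisfy this recursion. Read \<open>p\<close> as a Young diagram with rows
  \<open>p 1 \<ge> \<dots> \<ge> p m\<close>: then \<open>Delta p k\<close> counts its columns of height \<open>k\<close> and \<open>p 1\<close> counts all
  its columns. The multinomial Pascal rule splits the term of \<open>p\<close> into one summand for each
  \<open>k\<close> with \<open>Delta p k > 0\<close>, namely \<open>(-1)^(k+1) a k\<close> times the term of \<open>p\<close> with one column
  of height \<open>k\<close> removed, and removing such a column is a bijection onto the partitions of
  \<open>n - k\<close>.\<close>

lemma partitions_outside: "p \<in> partitions m n \<Longrightarrow> i \<notin> {1..m} \<Longrightarrow> p i = 0"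
  by (simp add: partitions_def)

lemma partitions_sum: "p \<in> partitions m n \<Longrightarrow> (\<Sum>i=1..m. p i) = n"
  by (simp add: partitions_def)

lemma partitions_antimono:
  assumes p: "p \<in> partitions m n" and "1 \<le> i" "i \<le> j"
  shows "p j \<le> p i"
  using \<open>i \<le> j\<close>
proof (induction j rule: dec_induct)
  case (step j)
  have "p (Suc j) \<le> p j"
    using p \<open>1 \<le> i\<close> step.hyps partitions_outside[OF p, of "Suc j"]
    by (cases "j < m") (auto simp: partitions_def)
  with step.IH show ?case by linarith
qed simp

lemma partitions_le:
  assumes p: "p \<in> partitions m n"
  shows "p i \<le> n"
proof (cases "i \<in> {1..m}")
  case True
  then show ?thesis
    using member_le_sum[of i "{1..m}" p] partitions_sum[OF p] by simp
qed (simp add: partitions_outside[OF p])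

lemma finite_partitions: "finite (partitions m n)"
  by (rule finite_subset[OF _ finite_set_of_finite_funs[of "{1..m}" "{..n}" 0]])
    (auto simp: partitions_le partitions_outside)

lemma partitions_zero: "partitions m 0 = {\<lambda>_. 0}"
  unfolding partitions_def by (auto simp: fun_eq_iff) (metis atLeastAtMost_iff)

lemma partitions_sum_Delta:
  assumes p: "p \<in> partitions m n"
  shows "(\<Sum>k=1..m. Delta p k) = p 1"
proof -
  have "int (\<Sum>k=1..m. Delta p k) = - (\<Sum>k=1..m. int (p (Suc k)) - int (p k))"
    by (simp add: Delta_def partitions_antimono[OF p] sum_negf[symmetric])
  also have "\<dots> = int (p 1)"
    by (subst sum_Suc_diff) (simp_all add: partitions_outside[OF p])
  finally show ?thesis by linarith
qed

lemma partitions_first_pos: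
  assumes p: "p \<in> partitions m n" and "0 < n"
  shows "0 < p 1"
proof (rule ccontr)
  assume "\<not> 0 < p 1"
  then have "\<forall>i\<in>{1..m}. p i = 0"
    using partitions_antimono[OF p, of 1] by fastforce
  then show False
    using partitions_sum[OF p] \<open>0 < n\<close> by simp
qed

definition add_column :: "nat \<Rightarrow> (nat \<Rightarrow> nat) \<Rightarrow> nat \<Rightarrow> nat" where
  "add_column k p i = p i + of_bool (i \<in> {1..k})"

definition drop_column :: "nat \<Rightarrow> (nat \<Rightarrow> nat) \<Rightarrow> nat \<Rightarrow> nat" where
  "drop_column k p i = p i - of_bool (i \<in> {1..k})"

lemma drop_add_column [simp]: "drop_column k (add_column k p) = p"
  by (simp add: fun_eq_iff add_column_def drop_column_def)

lemma add_drop_column: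
  assumes p: "p \<in> partitions m n" and "1 \<le> k" "0 < p k"
  shows "add_column k (drop_column k p) = p"
  using partitions_antimono[OF p, of _ k] assms(3)
  by (fastforce simp: fun_eq_iff add_column_def drop_column_def)

lemma Delta_add_column:
  assumes p: "p \<in> partitions m n" and "1 \<le> k"
  shows "Delta (add_column k p) = (Delta p)(k := Suc (Delta p k))"
proof
  fix i
  show "Delta (add_column k p) i = ((Delta p)(k := Suc (Delta p k))) i"
    using partitions_antimono[OF p \<open>1 \<le> k\<close>, of "Suc k"] partitions_outside[OF p, of 0] assms(2)
    by (cases "i = 0") (auto simp: Delta_def add_column_def)
qed

lemma sum_of_bool_prefix:
  assumes "k \<le> m"
  shows "(\<Sum>i=1..m. of_bool (i \<in> {1..k}) :: nat) = k"
  using assms by (simp add: Int_absorb1 Collect_conj_eq flip: atLeastAtMost_def atMost_def)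

lemma add_column_partitions:
  assumes p: "p \<in> partitions m n" and "k \<le> m"
  shows "add_column k p \<in> partitions m (n + k)"
proof -
  have "(\<Sum>i=1..m. add_column k p i) = n + k"
    unfolding add_column_def sum.distrib partitions_sum[OF p] sum_of_bool_prefix[OF \<open>k \<le> m\<close>] ..
  then show ?thesis
    using p \<open>k \<le> m\<close> by (auto simp: partitions_def add_column_def)
qed

lemma Delta_pos_imp_le:
  assumes p: "p \<in> partitions m n" and "k \<in> {1..m}" "0 < Delta p k"
  shows "k \<le> n"
proof -
  have "k = (\<Sum>i=1..m. of_bool (i \<in> {1..k}) :: nat)"
    using assms(2) sum_of_bool_prefix[of k m] by simp
  also have "\<dots> \<le> (\<Sum>i=1..m. p i)"
    using partitions_antimono[OF p, of _ k] assms(3)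
    by (intro sum_mono) (fastforce simp: Delta_def)
  finally show ?thesis
    using partitions_sum[OF p] by simp
qed

lemma drop_column_partitions:
  assumes p: "p \<in> partitions m n" and k: "k \<in> {1..m}" "0 < Delta p k"
  shows "drop_column k p \<in> partitions m (n - k)"
proof -
  have pos: "of_bool (i \<in> {1..k}) \<le> p i" for i
    using partitions_antimono[OF p, of i k] k by (auto simp: Delta_def)
  have "(\<Sum>i=1..m. drop_column k p i) = n - k"
    using k sum_of_bool_prefix[of k m]
    unfolding drop_column_def sum_subtractf_nat[OF pos] partitions_sum[OF p] by simp
  moreover have "drop_column k p (Suc i) \<le> drop_column k p i" if "1 \<le> i" for i
    using partitions_antimono[OF p that, of "Suc i"] k pos[of i] pos[of "Suc i"]
    by (cases "i = k") (auto simp: drop_column_def Delta_def)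
  ultimately show ?thesis
    using p k by (auto simp: partitions_def drop_column_def)
qed

lemma Delta_drop_column:
  assumes p: "p \<in> partitions m n" and k: "k \<in> {1..m}" "0 < Delta p k"
  shows "Delta (drop_column k p) = (Delta p)(k := Delta p k - 1)"
    and "drop_column k p 1 = p 1 - 1"
proof -
  have "Delta p = Delta (add_column k (drop_column k p))"
    using add_drop_column[OF p] k by (simp add: Delta_def)
  also have "\<dots> = (Delta (drop_column k p))(k := Suc (Delta (drop_column k p) k))"
    using Delta_add_column[OF drop_column_partitions[OF p k]] k by simp
  finally show "Delta (drop_column k p) = (Delta p)(k := Delta p k - 1)"
    by (simp add: fun_eq_iff)
  show "drop_column k p 1 = p 1 - 1"
    using k by (simp add: drop_column_def)
qed

lemma bij_betw_add_column:
  assumes "k \<in> {1..m}" "k \<le> n"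
  shows "bij_betw (add_column k) (partitions m (n - k)) {p \<in> partitions m n. 0 < Delta p k}"
proof (rule bij_betw_byWitness[where f' = "drop_column k"])
  show "add_column k ` partitions m (n - k) \<subseteq> {p \<in> partitions m n. 0 < Delta p k}"
    using add_column_partitions[of _ m "n - k" k] Delta_add_column[of _ m "n - k" k] assms
    by auto
  show "drop_column k ` {p \<in> partitions m n. 0 < Delta p k} \<subseteq> partitions m (n - k)"
    using drop_column_partitions assms(1) by blast
  show "\<forall>p\<in>{p \<in> partitions m n. 0 < Delta p k}. add_column k (drop_column k p) = p"
    using add_drop_column assms(1) by (auto simp: Delta_def)
qed simp

lemma multinom_decrement:
  assumes k: "k \<in> {1..m}" and "0 < j k"
  shows "multinom m q (j(k := j k - 1)) = real (j k) / real (Suc q) * multinom m (Suc q) j"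
proof -
  define R where "R = (\<Prod>i\<in>{1..m}-{k}. (fact (j i) :: real))"
  have "(\<Prod>i=1..m. fact ((j(k := j k - 1)) i) :: real) = fact (j k - 1) * R"
    unfolding R_def using k by (subst prod.remove[of _ k]) (auto intro!: prod.cong)
  moreover have "(\<Prod>i=1..m. fact (j i) :: real) = fact (j k) * R"
    unfolding R_def using k by (subst prod.remove[of _ k]) auto
  moreover have "(fact (j k) :: real) = real (j k) * fact (j k - 1)"
    using \<open>0 < j k\<close> by (rule fact_reduce)
  moreover define s where "s = real (Suc q)"
  then have "fact (Suc q) = s * fact q" "s \<noteq> 0"
    by simp_all
  moreover have "R \<noteq> 0" "real (j k) \<noteq> 0"
    unfolding R_def using \<open>0 < j k\<close> by simp_all
  ultimately show ?thesis
    unfolding multinom_def s_def[symmetric] by (simp add: field_simps)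
qed

lemma multinom_Suc:
  assumes "(\<Sum>k=1..m. j k) = Suc q"
  shows "multinom m (Suc q) j = (\<Sum>k=1..m. if 0 < j k then multinom m q (j(k := j k - 1)) else 0)"
proof -
  have "(\<Sum>k=1..m. if 0 < j k then multinom m q (j(k := j k - 1)) else 0)
      = (\<Sum>k=1..m. real (j k) / real (Suc q) * multinom m (Suc q) j)"
    using multinom_decrement by (intro sum.cong) auto
  also have "\<dots> = (\<Sum>k=1..m. real (j k)) / real (Suc q) * multinom m (Suc q) j"
    by (simp add: sum_distrib_right sum_divide_distrib)
  also have "(\<Sum>k=1..m. real (j k)) = real (Suc q)"
    unfolding of_nat_sum[symmetric] assms ..
  finally show ?thesis
    by simp
qed

lemma prod_power_decrement:
  fixes a :: "'b \<Rightarrow> 'a::comm_monoid_mult"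
  assumes "finite A" "k \<in> A" "0 < j k"
  shows "(\<Prod>i\<in>A. a i ^ j i) = a k * (\<Prod>i\<in>A. a i ^ (j(k := j k - 1)) i)"
proof -
  have "(\<Prod>i\<in>A. a i ^ (j(k := j k - 1)) i) = a k ^ (j k - 1) * (\<Prod>i\<in>A-{k}. a i ^ j i)"
    using assms by (subst prod.remove[of _ k]) (auto intro!: prod.cong)
  moreover have "(\<Prod>i\<in>A. a i ^ j i) = a k ^ j k * (\<Prod>i\<in>A-{k}. a i ^ j i)"
    using assms by (subst prod.remove[of _ k]) auto
  moreover have "a k ^ j k = a k * a k ^ (j k - 1)"
    using \<open>0 < j k\<close> by (simp flip: power_Suc)
  ultimately show ?thesis
    by (simp add: mult.assoc)
qed

definition partition_term :: "nat \<Rightarrow> (nat \<Rightarrow> real) \<Rightarrow> nat \<Rightarrow> (nat \<Rightarrow> nat) \<Rightarrow> real" where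
  "partition_term m a n p =
     (-1) ^ (n + p 1) * multinom m (p 1) (Delta p) * (\<Prod>k=1..m. a k ^ Delta p k)"

definition inverse_coeff :: "nat \<Rightarrow> (nat \<Rightarrow> real) \<Rightarrow> nat \<Rightarrow> real" where
  "inverse_coeff m a n = (\<Sum>p\<in>partitions m n. partition_term m a n p)"

lemma partition_term_drop_columns:
  assumes p: "p \<in> partitions m n" and "0 < n"
  shows "partition_term m a n p = (\<Sum>k=1..m. if 0 < Delta p k
      then (-1) ^ Suc k * a k * partition_term m a (n - k) (drop_column k p) else 0)"
proof -
  obtain q where q: "p 1 = Suc q"
    using partitions_first_pos[OF p \<open>0 < n\<close>] gr0_implies_Suc by blast
  define A where "A = (\<Prod>i=1..m. a i ^ Delta p i)"
  have Delta_sum: "(\<Sum>k=1..m. Delta p k) = Suc q"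
    using partitions_sum_Delta[OF p] q by simp
  have "partition_term m a n p = (\<Sum>k=1..m. if 0 < Delta p k
      then (-1) ^ (n + Suc q) * multinom m q ((Delta p)(k := Delta p k - 1)) * A else 0)"
    unfolding partition_term_def q multinom_Suc[OF Delta_sum] A_def sum_distrib_left sum_distrib_right
    by (intro sum.cong) auto
  also have "\<dots> = (\<Sum>k=1..m. if 0 < Delta p k
      then (-1) ^ Suc k * a k * partition_term m a (n - k) (drop_column k p) else 0)"
  proof (intro sum.cong refl)
    fix k assume k: "k \<in> {1..m}"
    show "(if 0 < Delta p k
          then (-1) ^ (n + Suc q) * multinom m q ((Delta p)(k := Delta p k - 1)) * A else 0)
        = (if 0 < Delta p k
          then (-1) ^ Suc k * a k * partition_term m a (n - k) (drop_column k p) else 0)"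
    proof (cases "0 < Delta p k")
      case True
      have "n + Suc q = Suc k + (n - k + q)"
        using Delta_pos_imp_le[OF p k True] by simp
      then have "(-1::real) ^ (n + Suc q) = (-1) ^ Suc k * (-1) ^ (n - k + q)"
        by (simp only: power_add)
      moreover have "A = a k * (\<Prod>i=1..m. a i ^ ((Delta p)(k := Delta p k - 1)) i)"
        unfolding A_def using k True by (intro prod_power_decrement) auto
      ultimately show ?thesis
        using True unfolding partition_term_def Delta_drop_column[OF p k True] q by simp
    qed simp
  qed
  finally show ?thesis .
qed

lemma sum_partitions_drop_column:
  assumes k: "k \<in> {1..m}"
  shows "(\<Sum>p\<in>partitions m n. if 0 < Delta p k then f (drop_column k p) else 0)
    = (if k \<le> n then \<Sum>p\<in>partitions m (n - k). f p else 0)"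
proof (cases "k \<le> n")
  case True
  have "(\<Sum>p\<in>partitions m n. if 0 < Delta p k then f (drop_column k p) else 0)
      = (\<Sum>p\<in>{p \<in> partitions m n. 0 < Delta p k}. f (drop_column k p))"
    by (simp add: sum.inter_filter finite_partitions)
  also have "\<dots> = (\<Sum>p\<in>partitions m (n - k). f (drop_column k (add_column k p)))"
    by (rule sum.reindex_bij_betw[OF bij_betw_add_column[OF k True], symmetric])
  finally show ?thesis
    using True by simp
next
  case False
  then have "\<not> 0 < Delta p k" if "p \<in> partitions m n" for p
    using Delta_pos_imp_le[OF that k] by linarith
  with False show ?thesis
    by (auto intro: sum.neutral)
qed

lemma inverse_coeff_0: "inverse_coeff m a 0 = 1"
  by (simp add: inverse_coeff_def partition_term_def partitions_zero Delta_def multinom_def)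

lemma inverse_coeff_rec:
  assumes "0 < n"
  shows "inverse_coeff m a n = (\<Sum>k=1..min m n. (-1) ^ Suc k * a k * inverse_coeff m a (n - k))"
proof -
  have "inverse_coeff m a n = (\<Sum>k=1..m. \<Sum>p\<in>partitions m n. if 0 < Delta p k
      then (-1) ^ Suc k * a k * partition_term m a (n - k) (drop_column k p) else 0)"
    unfolding inverse_coeff_def
    by (simp add: partition_term_drop_columns[OF _ assms] cong: sum.cong) (rule sum.swap)
  also have "\<dots> = (\<Sum>k=1..m. if k \<le> n then (-1) ^ Suc k * a k * inverse_coeff m a (n - k) else 0)"
    by (intro sum.cong refl, subst sum_partitions_drop_column)
      (auto simp: inverse_coeff_def sum_distrib_left)
  also have "\<dots> = (\<Sum>k\<in>{k \<in> {1..m}. k \<le> n}. (-1) ^ Suc k * a k * inverse_coeff m a (n - k))"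
    by (rule sum.inter_filter[symmetric]) simp
  also have "{k \<in> {1..m}. k \<le> n} = {1..min m n}"
    by auto
  finally show ?thesis .
qed

lemma coeff_sum_monom: "coeff (\<Sum>i\<le>m. monom (f i) i) n = (if n \<le> m then f n else 0)"
  by (simp add: coeff_sum coeff_monom)

lemma degree_sum_monom_le: "degree (\<Sum>i\<le>m. monom (f i) i) \<le> m"
  by (rule degree_le) (simp add: coeff_sum_monom)

lemma coeff_tmult: "coeff (tmult m p q) i = (if i \<le> m then coeff (p * q) i else 0)"
  by (simp add: tmult_def coeff_sum_monom)

lemma tmult_commute: "tmult m p q = tmult m q p"
  by (simp add: tmult_def mult.commute)

lemma tmult_eq_1_iff: "tmult m p q = 1 \<longleftrightarrow> (\<forall>i\<le>m. coeff (p * q) i = of_bool (i = 0))"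
  by (auto simp: poly_eq_iff coeff_tmult coeff_1)

lemma tmult_inverse_coeff:
  assumes "a 0 = 1"
  shows "tmult m (\<Sum>k\<le>m. monom ((-1) ^ k * a k) k) (\<Sum>n\<le>m. monom (inverse_coeff m a n) n) = 1"
  unfolding tmult_eq_1_iff
proof (intro allI impI)
  fix i assume "i \<le> m"
  let ?c = "inverse_coeff m a"
  have "coeff ((\<Sum>k\<le>m. monom ((-1) ^ k * a k) k) * (\<Sum>n\<le>m. monom (?c n) n)) i
      = (\<Sum>k\<le>i. (-1) ^ k * a k * ?c (i - k))"
    unfolding coeff_mult coeff_sum_monom using \<open>i \<le> m\<close> by (intro sum.cong) auto
  also have "\<dots> = of_bool (i = 0)"
  proof (cases "i = 0")
    case True
    then show ?thesis
      using assms by (simp add: inverse_coeff_0)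
  next
    case False
    have "(\<Sum>k\<le>i. (-1) ^ k * a k * ?c (i - k)) = ?c i + (\<Sum>k=1..i. (-1) ^ k * a k * ?c (i - k))"
      using assms by (simp add: atMost_atLeast0 sum.atLeast_Suc_atMost)
    also have "?c i = - (\<Sum>k=1..i. (-1) ^ k * a k * ?c (i - k))"
      using inverse_coeff_rec[of i m a] False \<open>i \<le> m\<close> by (simp add: sum_negf)
    finally show ?thesis
      using False by simp
  qed
  finally show "coeff ((\<Sum>k\<le>m. monom ((-1) ^ k * a k) k) * (\<Sum>n\<le>m. monom (?c n) n)) i
      = of_bool (i = 0)" .
qed

lemma moment_0:
  assumes "distribution_function F"
  shows "moment F 0 = 1"
proof -
  interpret real_distribution "interval_measure F"
    using assms by (intro real_distribution_interval_measure)
      (auto simp: distribution_function_def dest: monoD)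
  show ?thesis
    using prob_space by (simp add: moment_def)
qed

theorem proposition2p1p2:
  fixes F :: "real \<Rightarrow> real" and m :: nat
  assumes "m > 0"
    and "distribution_function F"
    and "integrable (interval_measure F) (\<lambda>x. \<bar>x\<bar> ^ m)"
  shows "trunc_invertible m (L_op F m)
    \<and> degree (L_inv_formula F m) \<le> m
    \<and> tmult m (L_op F m) (L_inv_formula F m) = 1
    \<and> tmult m (L_inv_formula F m) (L_op F m) = 1"
proof -
  define a where "a k = moment F k / fact k" for k
  have "L_op F m = (\<Sum>k\<le>m. monom ((-1) ^ k * a k) k)"
    by (simp add: L_op_def a_def)
  moreover have "L_inv_formula F m = (\<Sum>n\<le>m. monom (inverse_coeff m a n) n)"
    by (simp add: L_inv_formula_def inverse_coeff_def partition_term_def a_def)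
  moreover have "a 0 = 1"
    using moment_0[OF assms(2)] by (simp add: a_def)
  ultimately have "tmult m (L_op F m) (L_inv_formula F m) = 1"
    "degree (L_op F m) \<le> m" "degree (L_inv_formula F m) \<le> m"
    using tmult_inverse_coeff degree_sum_monom_le by simp_all
  then show ?thesis
    unfolding trunc_invertible_def by (metis tmult_commute)
qed

end
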